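(* For every $l\ge 9$, the graph $C_l\uplus Q(2,2,2)$ has a dispersed $4$-placement.
   Context: $H_1\uplus H_2$ denotes the vertex-disjoint union. $Q(n_1,\dots,n_t)$ ($1\le n_1\le\cdots\le n_t$) is the tree obtained from the star with centre $v$ and $t$ leaves by replacing each leaf with a path $P_{n_i}=v^i_1v^i_2\cdots v^i_{n_i}$, where $v$ is adjacent to $v^i_1$; so $Q(2,2,2)$ is the spider with three legs of length 2 (7 vertices). For a graph $H$ on $m$ vertices, a $k$-placement of $H$ is a $k$-tuple $(\phi_1,\dots,\phi_k)$ of bijections $\phi_i:V(H)\to V(K_m)$ with pairwise disjoint edge sets $\phi_i(E(H))$; it is dispersed if $\phi_i(v)\ne\phi_j(v)$ for every vertex $v$ and all $i\ne j$. *)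

theory Defs
  imports Main
begin

text \<open>A (simple) graph is a pair (V, E): a finite vertex set V and a set E of
  2-element subsets of V (undirected edges).\<close>

type_synonym 'a graph = "'a set \<times> 'a set set"

text \<open>Cycle C_l on vertices 0..l-1 (meaningful for l \<ge> 3).\<close>
definition cycle_graph :: "nat \<Rightarrow> nat graph" where
  "cycle_graph l = ({0..<l}, {{i, Suc i mod l} | i. i < l})"

text \<open>The tree Q(n_1,...,n_t): centre None, and Some (i, j) is the vertex v^{i+1}_{j+1}
  of the path P_{n_{i+1}} (0-based indices).\<close>
definition Q_graph :: "nat list \<Rightarrow> (nat \<times> nat) option graph" where
  "Q_graph ns =
     ({None} \<union> {Some (i, j) | i j. i < length ns \<and> j < ns ! i},
      {{None, Some (i, 0)} | i. i < length ns \<and> 0 < ns ! i}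
      \<union> {{Some (i, j), Some (i, Suc j)} | i j. i < length ns \<and> Suc j < ns ! i})"

definition disj_union :: "'a graph \<Rightarrow> 'b graph \<Rightarrow> ('a + 'b) graph" where
  "disj_union G H =
     (Inl ` fst G \<union> Inr ` fst H, (image Inl) ` snd G \<union> (image Inr) ` snd H)"

text \<open>A k-placement of H (with m = |V(H)| vertices) is a k-tuple (phi_0,...,phi_{k-1}) of
  bijections V(H) \<rightarrow> V(K_m) = {0..<m} whose images of the edge set are pairwise disjoint.\<close>
definition placement :: "'a graph \<Rightarrow> nat \<Rightarrow> (nat \<Rightarrow> 'a \<Rightarrow> nat) \<Rightarrow> bool" where
  "placement H k \<phi> \<longleftrightarrow>
     (\<forall>i<k. bij_betw (\<phi> i) (fst H) {0..<card (fst H)}) \<and>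
     (\<forall>i<k. \<forall>j<k. i \<noteq> j \<longrightarrow> (image (\<phi> i)) ` snd H \<inter> (image (\<phi> j)) ` snd H = {})"

definition dispersed_placement :: "'a graph \<Rightarrow> nat \<Rightarrow> (nat \<Rightarrow> 'a \<Rightarrow> nat) \<Rightarrow> bool" where
  "dispersed_placement H k \<phi> \<longleftrightarrow>
     placement H k \<phi> \<and> (\<forall>i<k. \<forall>j<k. i \<noteq> j \<longrightarrow> (\<forall>v\<in>fst H. \<phi> i v \<noteq> \<phi> j v))"

end

theory Submission
  imports Defs "HOL-Number_Theory.Cong"
begin

(*
  All four copies are rotations of one labelling. If f is a bijection from the n = l + 7 vertices
  onto Z_n, the maps v \<mapsto> f v + 2i (i < 4) are bijections that differ at every vertex, and copy i
  sends an edge xy to a pair with sum f x + f y + 4i. So if all edge sums f x + f y lie in a set K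
  whose translates K + 4i are pairwise disjoint modulo n, the four edge sets are disjoint.

  For l \<ge> 29, label the vertices in an order in which consecutive vertices are almost always
  adjacent by the zigzag 0, 1, n - 1, 2, n - 2, ...: consecutive sums alternate between 1 and 0,
  and the two remaining edges (closing the cycle, branching at the spider centre) have sums C
  near n/2 and X \<in> {2, n - 1}; K = {0, 1, C, X} works. For 9 \<le> l \<le> 28 explicit labellings with
  all edge sums in {0, 1, 2, 3} are checked by evaluation.
*)

lemma bij_betw_add_mod:
  assumes "0 < n"
  shows "bij_betw (\<lambda>x. (x + c) mod n) {0..<n} {0..<(n::nat)}"
proof -
  have inj: "inj_on (\<lambda>x. (x + c) mod n) {0..<n}"
  proof (rule inj_onI)
    fix x y assume "x \<in> {0..<n}" "y \<in> {0..<n}" "(x + c) mod n = (y + c) mod n"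
    then have "[x + c = y + c] (mod n)" by (simp add: cong_def)
    then have "[x = y] (mod n)" by (simp add: cong_add_rcancel_nat)
    with \<open>x \<in> _\<close> \<open>y \<in> _\<close> show "x = y" by (simp add: cong_def)
  qed
  moreover have "(\<lambda>x. (x + c) mod n) ` {0..<n} = {0..<n}"
    using assms by (intro endo_inj_surj[OF _ _ inj]) auto
  ultimately show ?thesis by (simp add: bij_betw_def)
qed

lemma bij_betw_nth_if_sort_eq_upt:
  assumes "sort xs = [0..<n]"
  shows "bij_betw (nth xs) {0..<n} {0..<n}"
proof (rule bij_betw_nth)
  show "distinct xs" using assms by (metis distinct_sort distinct_upt)
  show "{0..<n} = {..<length xs}" using assms by (metis atLeast0LessThan length_sort length_upt minus_nat.diff_0)
  show "{0..<n} = set xs" using assms by (metis set_sort set_upt)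
qed

lemma mod_add_shifted_pair:
  "((x + c) mod n + (y + c) mod n) mod n = ((x + y) mod n + 2 * c) mod (n::nat)"
proof -
  have "((x + c) mod n + (y + c) mod n) mod n = ((x + y) + 2 * c) mod n"
    unfolding mod_add_eq by (simp add: mult_2 add_ac)
  also have "\<dots> = ((x + y) mod n + 2 * c) mod n"
    by (simp add: mod_add_left_eq)
  finally show ?thesis .
qed

lemma sum_eq_if_doubleton_eq: "{a, b} = {c, d} \<Longrightarrow> a + b = c + (d::nat)"
  by (auto simp: doubleton_eq_iff)

lemma dispersed_placement_of_sum_labelling:
  fixes H :: "'a graph" and f :: "'a \<Rightarrow> nat" and s :: "nat \<Rightarrow> nat"
  assumes f: "bij_betw f (fst H) {0..<n}"
    and edge_sums: "\<And>e. e \<in> snd H \<Longrightarrow> \<exists>x y. e = {x, y} \<and> (f x + f y) mod n \<in> K"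
    and shifts: "\<And>i. i < k \<Longrightarrow> s i < n" "inj_on s {..<k}"
    and separated: "\<And>i j a b. \<lbrakk>i < k; j < k; i \<noteq> j; a \<in> K; b \<in> K\<rbrakk>
      \<Longrightarrow> (a + 2 * s i) mod n \<noteq> (b + 2 * s j) mod n"
  shows "dispersed_placement H k (\<lambda>i v. (f v + s i) mod n)"
proof -
  define \<phi> where "\<phi> = (\<lambda>i v. (f v + s i) mod n)"
  have card: "card (fst H) = n"
    using bij_betw_same_card[OF f] by simp
  have bij: "bij_betw (\<phi> i) (fst H) {0..<n}" if "i < k" for i
  proof -
    have "0 < n" using shifts(1)[OF that] by simp
    then show ?thesis
      unfolding \<phi>_def using bij_betw_trans[OF f bij_betw_add_mod] by (simp add: comp_def)
  qed
  have disjoint: "image (\<phi> i) ` snd H \<inter> image (\<phi> j) ` snd H = {}"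
    if ij: "i < k" "j < k" "i \<noteq> j" for i j
  proof (rule ccontr)
    assume "image (\<phi> i) ` snd H \<inter> image (\<phi> j) ` snd H \<noteq> {}"
    then obtain e e' where "e \<in> snd H" "e' \<in> snd H" and same: "\<phi> i ` e = \<phi> j ` e'"
      by auto
    obtain x y where e: "e = {x, y}" "(f x + f y) mod n \<in> K"
      using edge_sums[OF \<open>e \<in> snd H\<close>] by blast
    obtain x' y' where e': "e' = {x', y'}" "(f x' + f y') mod n \<in> K"
      using edge_sums[OF \<open>e' \<in> snd H\<close>] by blast
    have "{\<phi> i x, \<phi> i y} = {\<phi> j x', \<phi> j y'}"
      using same unfolding e(1) e'(1) image_insert image_empty .
    then have "\<phi> i x + \<phi> i y = \<phi> j x' + \<phi> j y'"
      by (rule sum_eq_if_doubleton_eq)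
    then have "(\<phi> i x + \<phi> i y) mod n = (\<phi> j x' + \<phi> j y') mod n"
      by (simp only:)
    then have "((f x + f y) mod n + 2 * s i) mod n = ((f x' + f y') mod n + 2 * s j) mod n"
      unfolding \<phi>_def mod_add_shifted_pair .
    with separated[OF ij e(2) e'(2)] show False ..
  qed
  have dispersed: "\<phi> i v \<noteq> \<phi> j v" if ij: "i < k" "j < k" "i \<noteq> j" for i j v
  proof
    assume "\<phi> i v = \<phi> j v"
    then have "[f v + s i = f v + s j] (mod n)"
      unfolding \<phi>_def cong_def .
    then have "[s i = s j] (mod n)"
      by (simp add: cong_add_lcancel_nat)
    then have "s i = s j" using shifts(1)[OF ij(1)] shifts(1)[OF ij(2)] by (simp add: cong_def)
    with ij shifts(2) show False by (simp add: inj_on_def)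
  qed
  have "dispersed_placement H k \<phi>"
    unfolding dispersed_placement_def placement_def card
    by (intro conjI allI impI ballI bij disjoint dispersed)
  then show ?thesis
    unfolding \<phi>_def .
qed

abbreviation cycle_spider :: "nat \<Rightarrow> (nat + (nat \<times> nat) option) graph" where
  "cycle_spider l \<equiv> disj_union (cycle_graph l) (Q_graph [2, 2, 2])"

text \<open>The vertices of \<open>C\<^sub>l \<uplus> Q(2,2,2)\<close> are indexed by \<open>{0..<l+7}\<close>: the cycle in its own order,
  then the spider as the path \<open>v\<^sup>1\<^sub>2 v\<^sup>1\<^sub>1 v v\<^sup>2\<^sub>1 v\<^sup>2\<^sub>2\<close> followed by \<open>v\<^sup>3\<^sub>1 v\<^sup>3\<^sub>2\<close>.\<close>

definition spider_layout :: "(nat \<times> nat) option list" where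
  "spider_layout = [Some (0, 1), Some (0, 0), None, Some (1, 0), Some (1, 1), Some (2, 0), Some (2, 1)]"

definition vertex_index :: "nat \<Rightarrow> nat + (nat \<times> nat) option \<Rightarrow> nat" where
  "vertex_index l v = (case v of
       Inl k \<Rightarrow> k
     | Inr None \<Rightarrow> l + 2
     | Inr (Some (i, j)) \<Rightarrow> l + [[1, 0], [3, 4], [5, 6]] ! i ! j)"

definition vertex_of_index :: "nat \<Rightarrow> nat \<Rightarrow> nat + (nat \<times> nat) option" where
  "vertex_of_index l t = (if t < l then Inl t else Inr (spider_layout ! (t - l)))"

definition index_edges :: "nat \<Rightarrow> (nat \<times> nat) list" where
  "index_edges l = map (\<lambda>k. (k, Suc k)) [0..<l - 1] @
     [(0, l - 1), (l + 1, l), (l + 2, l + 1), (l + 2, l + 3), (l + 3, l + 4), (l + 2, l + 5), (l + 5, l + 6)]"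

lemma vertices_cycle_spider:
  "fst (cycle_spider l) = Inl ` {0..<l} \<union> Inr ` ({None} \<union> Some ` ({0, 1, 2} \<times> {0, 1}))"
  by (auto simp: disj_union_def cycle_graph_def Q_graph_def less_Suc_eq nth_Cons'
      numeral_3_eq_3 numeral_2_eq_2)

lemma vertex_index_bij: "bij_betw (vertex_index l) (fst (cycle_spider l)) {0..<l + 7}"
proof (rule bij_betw_byWitness[where f' = "vertex_of_index l"])
  show "\<forall>v\<in>fst (cycle_spider l). vertex_of_index l (vertex_index l v) = v"
    by (auto simp: vertices_cycle_spider vertex_index_def vertex_of_index_def spider_layout_def)
  show "vertex_index l ` fst (cycle_spider l) \<subseteq> {0..<l + 7}"
    by (auto simp: vertices_cycle_spider vertex_index_def)
  have "vertex_index l (vertex_of_index l t) = t \<and> vertex_of_index l t \<in> fst (cycle_spider l)"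
    if "t < l + 7" for t
  proof (cases "t < l")
    case True
    then show ?thesis by (simp add: vertices_cycle_spider vertex_index_def vertex_of_index_def)
  next
    case False
    define d where "d = t - l"
    have "t = l + d" "d = 0 \<or> d = 1 \<or> d = 2 \<or> d = 3 \<or> d = 4 \<or> d = 5 \<or> d = 6"
      using False that by (auto simp: d_def)
    then show ?thesis
      by (elim disjE)
        (simp_all add: vertices_cycle_spider vertex_index_def vertex_of_index_def spider_layout_def)
  qed
  then show "\<forall>t\<in>{0..<l + 7}. vertex_index l (vertex_of_index l t) = t"
    and "vertex_of_index l ` {0..<l + 7} \<subseteq> fst (cycle_spider l)"
    by auto
qed

lemma edge_cycle_spider_cases:
  assumes "e \<in> snd (cycle_spider l)"
  obtains (cycle) i where "i < l" "e = {Inl i, Inl (Suc i mod l)}"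
    | (hub) i where "i < 3" "e = {Inr None, Inr (Some (i, 0))}"
    | (leg) i where "i < 3" "e = {Inr (Some (i, 0)), Inr (Some (i, 1))}"
proof -
  have "(\<exists>i<l. e = {Inl i, Inl (Suc i mod l)}) \<or> (\<exists>i<3. e = {Inr None, Inr (Some (i, 0))})
      \<or> (\<exists>i<3. e = {Inr (Some (i, 0)), Inr (Some (i, 1))})"
    using assms by (auto simp: disj_union_def cycle_graph_def Q_graph_def less_Suc_eq nth_Cons'
        numeral_3_eq_3)
  then show thesis using that by blast
qed

lemma edge_cycle_spider_index_edge:
  assumes "e \<in> snd (cycle_spider l)"
  shows "\<exists>x y. e = {x, y} \<and> (vertex_index l x, vertex_index l y) \<in> set (index_edges l)"
  using assms
proof (cases rule: edge_cycle_spider_cases)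
  case (cycle i)
  show ?thesis
  proof (cases "Suc i < l")
    case True
    then show ?thesis using cycle
      by (intro exI[of _ "Inl i"] exI[of _ "Inl (Suc i)"]) (auto simp: vertex_index_def index_edges_def)
  next
    case False
    then have "Suc i = l" using cycle by simp
    then have "i = l - 1" "Suc i mod l = 0" by auto
    then have "e = {Inl 0, Inl (l - 1)}" using cycle by auto
    then show ?thesis
      by (intro exI[of _ "Inl 0"] exI[of _ "Inl (l - 1)"]) (simp add: vertex_index_def index_edges_def)
  qed
next
  case (hub i)
  then have "i = 0 \<or> i = 1 \<or> i = 2" by auto
  then have "(vertex_index l (Inr None), vertex_index l (Inr (Some (i, 0)))) \<in> set (index_edges l)"
    by (elim disjE) (simp_all add: vertex_index_def index_edges_def)
  then show ?thesis using hub by blast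
next
  case (leg i)
  then have "i = 0 \<or> i = 1 \<or> i = 2" by auto
  then have "(vertex_index l (Inr (Some (i, 0))), vertex_index l (Inr (Some (i, 1)))) \<in> set (index_edges l)"
    by (elim disjE) (simp_all add: vertex_index_def index_edges_def)
  then show ?thesis using leg by blast
qed

lemma cycle_spider_dispersed_placement:
  assumes g: "bij_betw g {0..<l + 7} {0..<l + 7}"
    and sums: "\<And>p q. (p, q) \<in> set (index_edges l) \<Longrightarrow> (g p + g q) mod (l + 7) \<in> K"
    and separated: "\<And>i j a b. \<lbrakk>i < 4; j < 4; i \<noteq> j; a \<in> K; b \<in> K\<rbrakk>
      \<Longrightarrow> (a + 4 * i) mod (l + 7) \<noteq> (b + 4 * j) mod (l + 7)"
  shows "\<exists>\<phi>. dispersed_placement (cycle_spider l) 4 \<phi>"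
proof -
  have "dispersed_placement (cycle_spider l) 4 (\<lambda>i v. ((g \<circ> vertex_index l) v + 2 * i) mod (l + 7))"
  proof (rule dispersed_placement_of_sum_labelling[where s = "\<lambda>i. 2 * i" and K = K])
    show "bij_betw (g \<circ> vertex_index l) (fst (cycle_spider l)) {0..<l + 7}"
      using bij_betw_trans[OF vertex_index_bij g] .
    show "\<exists>x y. e = {x, y} \<and> ((g \<circ> vertex_index l) x + (g \<circ> vertex_index l) y) mod (l + 7) \<in> K"
      if "e \<in> snd (cycle_spider l)" for e
      using edge_cycle_spider_index_edge[OF that] sums by auto
    show "2 * i < l + 7" if "i < 4" for i
      using that by simp
    show "inj_on (\<lambda>i. 2 * i) {..<4::nat}"
      by (simp add: inj_on_def)
    show "(a + 2 * (2 * i)) mod (l + 7) \<noteq> (b + 2 * (2 * j)) mod (l + 7)"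
      if "i < 4" "j < 4" "i \<noteq> j" "a \<in> K" "b \<in> K" for i j a b
      using separated[OF that] by simp
  qed
  then show ?thesis by blast
qed

definition zigzag :: "nat \<Rightarrow> nat \<Rightarrow> nat" where
  "zigzag n t = (if t = 0 then 0 else if even t then n - t div 2 else t div 2 + 1)"

lemma zigzag_even: "zigzag n (2 * a) = (if a = 0 then 0 else n - a)"
  by (simp add: zigzag_def)

lemma zigzag_odd: "zigzag n (2 * a + 1) = a + 1"
  by (simp add: zigzag_def)

lemma zigzag_less: "t < n \<Longrightarrow> zigzag n t < n"
  unfolding zigzag_def by presburger

lemma zigzag_inj_on: "inj_on (zigzag n) {0..<n}"
proof (rule inj_onI)
  fix s t assume "s \<in> {0..<n}" "t \<in> {0..<n}" "zigzag n s = zigzag n t"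
  then show "s = t"
    unfolding zigzag_def by (auto split: if_splits elim!: evenE oddE)
qed

lemma zigzag_bij: "bij_betw (zigzag n) {0..<n} {0..<n}"
proof -
  note inj = zigzag_inj_on[of n]
  have "zigzag n ` {0..<n} = {0..<n}"
    using zigzag_less by (intro endo_inj_surj[OF _ _ inj]) auto
  with inj show ?thesis by (simp add: bij_betw_def)
qed

lemma zigzag_Suc_sum: "Suc t < n \<Longrightarrow> (zigzag n t + zigzag n (Suc t)) mod n \<in> {0, 1}"
  unfolding zigzag_def by (auto simp: mod_Suc elim!: evenE oddE)

lemma zigzag_index_edge_sum:
  assumes "(p, q) \<in> set (index_edges l)"
  shows "(zigzag (l + 7) p + zigzag (l + 7) q) mod (l + 7)
    \<in> {0, 1, zigzag (l + 7) (l - 1), (zigzag (l + 7) (l + 2) + zigzag (l + 7) (l + 5)) mod (l + 7)}"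
proof -
  let ?z = "zigzag (l + 7)"
  have "(q = Suc p \<and> Suc p < l + 7) \<or> (p = Suc q \<and> Suc q < l + 7) \<or> (p, q) = (0, l - 1)
      \<or> (p, q) = (l + 2, l + 5)"
    using assms by (auto simp: index_edges_def)
  moreover have "(?z 0 + ?z (l - 1)) mod (l + 7) = ?z (l - 1)"
    using zigzag_less[of "l - 1" "l + 7"] by (simp add: zigzag_def)
  ultimately show ?thesis
    using zigzag_Suc_sum[of p "l + 7"] zigzag_Suc_sum[of q "l + 7"] by (auto simp: add.commute)
qed

text \<open>Modulo \<open>n\<close>, the translates of \<open>0, 1, X\<close> stay in the arc from \<open>-1\<close> to \<open>14\<close> and those of
  \<open>C\<close> in the arc from \<open>C\<close> to \<open>C + 12\<close>.\<close>

lemma four_translates_disjoint: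
  fixes n C X a b i j :: nat
  assumes "15 \<le> C" "C + 14 \<le> n" "X = 2 \<or> X = n - 1"
    and "a \<in> {0, 1, C, X}" "b \<in> {0, 1, C, X}" "i < 4" "j < 4" "i \<noteq> j"
  shows "(a + 4 * i) mod n \<noteq> (b + 4 * j) mod n"
proof -
  have reduce: "(x + 4 * m) mod n = (if x + 4 * m < n then x + 4 * m else x + 4 * m - n)"
    if "x \<in> {0, 1, C, X}" "m < 4" for x m
  proof -
    have "x + 4 * m < 2 * n" using that assms by auto
    then show ?thesis by (simp add: le_mod_geq)
  qed
  show ?thesis
    using assms unfolding reduce[OF assms(4,6)] reduce[OF assms(5,7)] by auto
qed

lemma cycle_spider_dispersed_placement_large:
  assumes "29 \<le> l"
  shows "\<exists>\<phi>. dispersed_placement (cycle_spider l) 4 \<phi>"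
proof -
  let ?z = "zigzag (l + 7)"
  define C where "C = ?z (l - 1)"
  define X where "X = (?z (l + 2) + ?z (l + 5)) mod (l + 7)"
  have bounds: "15 \<le> C \<and> C + 14 \<le> l + 7 \<and> (X = 2 \<or> X = l + 7 - 1)"
  proof (cases "even l")
    case True
    then obtain a where a: "l = 2 * a" ..
    have parity: "l - 1 = 2 * (a - 1) + 1" "l + 2 = 2 * (a + 1)" "l + 5 = 2 * (a + 2) + 1"
      using assms a by auto
    have "C = a" "X = (l + 7 + 2) mod (l + 7)"
      unfolding C_def X_def parity zigzag_even zigzag_odd using assms a by auto
    moreover have "(l + 7 + 2) mod (l + 7) = 2"
      by (simp only: mod_add_self1) simp
    ultimately show ?thesis using assms a by simp
  next
    case False
    then obtain a where a: "l = 2 * a + 1" ..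
    then have parity: "l - 1 = 2 * a" "l + 2 = 2 * (a + 1) + 1" "l + 5 = 2 * (a + 3)"
      by auto
    have "C = l + 7 - a" "X = l + 7 - 1"
      unfolding C_def X_def parity zigzag_even zigzag_odd using assms a by auto
    then show ?thesis using assms a by simp
  qed
  show ?thesis
  proof (rule cycle_spider_dispersed_placement[OF zigzag_bij, where K = "{0, 1, C, X}"])
    show "(?z p + ?z q) mod (l + 7) \<in> {0, 1, C, X}" if "(p, q) \<in> set (index_edges l)" for p q
      using zigzag_index_edge_sum[OF that] unfolding C_def X_def .
    show "(a + 4 * i) mod (l + 7) \<noteq> (b + 4 * j) mod (l + 7)"
      if "i < 4" "j < 4" "i \<noteq> j" "a \<in> {0, 1, C, X}" "b \<in> {0, 1, C, X}" for i j a b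
      using bounds four_translates_disjoint[OF _ _ _ that(4,5,1-3)] by blast
  qed
qed

definition small_sum_labelling :: "nat \<Rightarrow> nat list \<Rightarrow> bool" where
  "small_sum_labelling l tbl \<longleftrightarrow>
     sort tbl = [0..<l + 7] \<and> (\<forall>(p, q) \<in> set (index_edges l). (tbl ! p + tbl ! q) mod (l + 7) < 4)"

lemma cycle_spider_dispersed_placement_small_sums:
  assumes "9 \<le> l" "small_sum_labelling l tbl"
  shows "\<exists>\<phi>. dispersed_placement (cycle_spider l) 4 \<phi>"
proof (rule cycle_spider_dispersed_placement[where g = "nth tbl" and K = "{..<4}"])
  show "bij_betw (nth tbl) {0..<l + 7} {0..<l + 7}"
    using assms(2) bij_betw_nth_if_sort_eq_upt by (auto simp: small_sum_labelling_def)
  show "(tbl ! p + tbl ! q) mod (l + 7) \<in> {..<4}" if "(p, q) \<in> set (index_edges l)" for p q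
    using assms(2) that by (auto simp: small_sum_labelling_def)
  show "(a + 4 * i) mod (l + 7) \<noteq> (b + 4 * j) mod (l + 7)"
    if "i < 4" "j < 4" "i \<noteq> j" "a \<in> {..<4}" "b \<in> {..<4}" for i j a b
    using assms(1) that by auto
qed

text \<open>Found by computer search; entry \<open>k\<close> labels \<open>C\<^sub>l \<uplus> Q(2,2,2)\<close> for \<open>l = k + 9\<close>.\<close>

definition small_labellings :: "nat list list" where
  "small_labellings = [
     [0, 1, 2, 14, 5, 12, 4, 15, 3, 13, 6, 10, 7, 9, 8, 11],
     [0, 1, 16, 2, 15, 4, 13, 5, 14, 3, 8, 10, 7, 11, 9, 12, 6],
     [0, 1, 2, 16, 5, 13, 6, 15, 4, 17, 3, 14, 7, 11, 8, 10, 9, 12],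
     [0, 1, 18, 2, 17, 4, 15, 5, 14, 6, 16, 3, 9, 11, 8, 12, 10, 13, 7],
     [0, 1, 2, 18, 5, 15, 7, 16, 6, 17, 4, 19, 3, 11, 12, 8, 13, 10, 14, 9],
     [0, 1, 20, 2, 19, 4, 17, 5, 16, 7, 15, 6, 18, 3, 10, 12, 9, 13, 11, 14, 8],
     [0, 1, 2, 20, 5, 17, 8, 15, 7, 18, 6, 19, 4, 21, 3, 16, 9, 13, 10, 12, 11, 14],
     [0, 1, 22, 2, 21, 4, 19, 5, 18, 7, 16, 8, 17, 6, 20, 3, 11, 13, 10, 14, 12, 15, 9],
     [0, 1, 2, 22, 5, 19, 8, 16, 9, 18, 7, 20, 6, 21, 4, 23, 3, 17, 10, 14, 11, 13, 12, 15],
     [0, 1, 24, 2, 23, 4, 21, 5, 20, 7, 18, 8, 17, 9, 19, 6, 22, 3, 12, 14, 11, 15, 13, 16, 10],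
     [0, 1, 2, 24, 5, 21, 8, 18, 10, 19, 9, 20, 7, 22, 6, 23, 4, 25, 3, 14, 15, 11, 16, 13, 17, 12],
     [0, 1, 26, 2, 25, 4, 23, 5, 22, 7, 20, 8, 19, 10, 18, 9, 21, 6, 24, 3, 13, 15, 12, 16, 14, 17, 11],
     [0, 1, 2, 26, 5, 23, 8, 20, 11, 18, 10, 21, 9, 22, 7, 24, 6, 25, 4, 27, 3, 19, 12, 16, 13, 15, 14, 17],
     [0, 1, 28, 2, 27, 4, 25, 5, 24, 7, 22, 8, 21, 10, 19, 11, 20, 9, 23, 6, 26, 3, 14, 16, 13, 17, 15, 18, 12],
     [0, 1, 2, 28, 5, 25, 8, 22, 11, 19, 12, 21, 10, 23, 9, 24, 7, 26, 6, 27, 4, 29, 3, 20, 13, 17, 14, 16, 15, 18],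
     [0, 1, 30, 2, 29, 4, 27, 5, 26, 7, 24, 8, 23, 10, 21, 11, 20, 12, 22, 9, 25, 6, 28, 3, 15, 17, 14, 18, 16, 19, 13],
     [0, 1, 2, 30, 5, 27, 8, 24, 11, 21, 13, 22, 12, 23, 10, 25, 9, 26, 7, 28, 6, 29, 4, 31, 3, 17, 18, 14, 19, 16, 20, 15],
     [0, 1, 32, 2, 31, 4, 29, 5, 28, 7, 26, 8, 25, 10, 23, 11, 22, 13, 21, 12, 24, 9, 27, 6, 30, 3, 16, 18, 15, 19, 17, 20, 14],
     [0, 1, 2, 32, 5, 29, 8, 26, 11, 23, 14, 21, 13, 24, 12, 25, 10, 27, 9, 28, 7, 30, 6, 31, 4, 33, 3, 22, 15, 19, 16, 18, 17, 20],
     [0, 1, 34, 2, 33, 4, 31, 5, 30, 7, 28, 8, 27, 10, 25, 11, 24, 13, 22, 14, 23, 12, 26, 9, 29, 6, 32, 3, 17, 19, 16, 20, 18, 21, 15]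
   ]"

lemma small_labellings_sum_labelling:
  "\<forall>l \<in> set [9..<29]. small_sum_labelling l (small_labellings ! (l - 9))"
  by code_simp

theorem lemma2p7:
  fixes l :: nat
  assumes "l \<ge> 9"
  shows "\<exists>\<phi>. dispersed_placement (disj_union (cycle_graph l) (Q_graph [2,2,2])) 4 \<phi>"
proof (cases "29 \<le> l")
  case True
  then show ?thesis by (rule cycle_spider_dispersed_placement_large)
next
  case False
  with assms have "l \<in> set [9..<29]"
    by (simp only: set_upt) simp
  with small_labellings_sum_labelling assms show ?thesis
    by (blast intro: cycle_spider_dispersed_placement_small_sums)
qed

end
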